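(* Let $B\in\mathbb{R}^{p\times H}$ be the incidence matrix described in the context, and assume the set of paths is nonempty. Then the all-ones vector $\mathbf 1\in\mathbb{R}^p$ does not belong to the column space of $B$.
   Context: $\mathcal G=(V,E)$ is a finite DAG; input neurons have no incoming edges, output neurons no outgoing edges, hidden neurons $\mathcal H$ ($H=|\mathcal H|$) are the rest. The parameter vector $\theta\in\mathbb{R}^p$ consists of one weight per edge and one bias $b_v$ per non-input neuron $v$. For $h\in\mathcal H$, $\mathrm{in}_h$ = indices of $b_h$ and of the weights of edges entering $h$, $\mathrm{out}_h$ = indices of the weights of edges leaving $h$. $B$ has columns indexed by $h\in\mathcal H$: $B_{ih}=-1$ if $i\in\mathrm{in}_h$, $1$ if $i\in\mathrm{out}_h$, $0$ otherwise. A path is a sequence $v_0\to\cdots\to v_d$ ($d\ge0$) along edges ending at an output neuron, where for $d=0$ the neuron $v_0$ is not an input neuron. *)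

theory Defs
  imports Complex_Main
begin

text \<open>Neural network DAG with vertex set V, edge relation E, designated input
neurons Inp and output neurons Out.  Parameters are indexed by edges (weights)
and by non-input neurons (biases).\<close>

datatype 'v param = Weight "'v \<times> 'v" | Bias 'v

definition params :: "'v set \<Rightarrow> ('v \<times> 'v) set \<Rightarrow> 'v set \<Rightarrow> 'v param set" where
  "params V E Inp = Weight ` E \<union> Bias ` (V - Inp)"

definition hidden :: "'v set \<Rightarrow> 'v set \<Rightarrow> 'v set \<Rightarrow> 'v set" where
  "hidden V Inp Out = V - Inp - Out"

definition in_idx :: "('v \<times> 'v) set \<Rightarrow> 'v \<Rightarrow> 'v param set" where
  "in_idx E h = insert (Bias h) (Weight ` {e \<in> E. snd e = h})"

definition out_idx :: "('v \<times> 'v) set \<Rightarrow> 'v \<Rightarrow> 'v param set" where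
  "out_idx E h = Weight ` {e \<in> E. fst e = h}"

text \<open>The matrix B (rows: parameter indices, columns: hidden neurons).\<close>
definition incB :: "('v \<times> 'v) set \<Rightarrow> 'v param \<Rightarrow> 'v \<Rightarrow> real" where
  "incB E i h = (if i \<in> in_idx E h then -1 else if i \<in> out_idx E h then 1 else 0)"

definition in_col_space :: "'i set \<Rightarrow> 'j set \<Rightarrow> ('i \<Rightarrow> 'j \<Rightarrow> real) \<Rightarrow> ('i \<Rightarrow> real) \<Rightarrow> bool" where
  "in_col_space P H M x \<longleftrightarrow> (\<exists>\<alpha>::'j \<Rightarrow> real. \<forall>i\<in>P. x i = (\<Sum>h\<in>H. M i h * \<alpha> h))"

definition is_path :: "'v set \<Rightarrow> ('v \<times> 'v) set \<Rightarrow> 'v set \<Rightarrow> 'v set \<Rightarrow> 'v list \<Rightarrow> bool" where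
  "is_path V E Inp Out vs \<longleftrightarrow>
     vs \<noteq> [] \<and> set vs \<subseteq> V \<and>
     (\<forall>k. Suc k < length vs \<longrightarrow> (vs ! k, vs ! Suc k) \<in> E) \<and>
     last vs \<in> Out \<and>
     (length vs = 1 \<longrightarrow> hd vs \<notin> Inp)"

end

theory Submission
  imports Defs
begin

text \<open>The row of \<open>B\<close> belonging to the bias of a non-input neuron \<open>v\<close> is \<open>-e\<^sub>v\<close> if \<open>v\<close> is
hidden and zero otherwise. Every path ends at an output neuron that is not an input
neuron (it either has length zero or is entered by an edge), so some row of \<open>B\<close>
vanishes, and the all-ones vector cannot be a combination of the columns.\<close>

lemma incB_Bias: "incB E (Bias v) h = (if h = v then -1 else 0)"
  by (auto simp: incB_def in_idx_def out_idx_def)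

lemma ones_not_in_col_space_incB:
  assumes "Bias v \<in> P" and "v \<notin> H"
  shows "\<not> in_col_space P H (incB E) (\<lambda>_. 1)"
proof
  assume "in_col_space P H (incB E) (\<lambda>_. 1)"
  then obtain \<alpha> where "(1::real) = (\<Sum>h\<in>H. incB E (Bias v) h * \<alpha> h)"
    using assms(1) unfolding in_col_space_def by blast
  also have "\<dots> = 0"
    using assms(2) by (intro sum.neutral) (auto simp: incB_Bias)
  finally show False by simp
qed

lemma is_path_last_non_input:
  assumes "\<forall>v\<in>Inp. \<forall>u. (u, v) \<notin> E" and "is_path V E Inp Out vs"
  shows "last vs \<in> V - Inp" and "last vs \<in> Out"
proof -
  have ne: "vs \<noteq> []" and "set vs \<subseteq> V" and "last vs \<in> Out"
    using assms(2) by (auto simp: is_path_def)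
  then show "last vs \<in> Out" by simp
  have "last vs \<notin> Inp"
  proof (cases "length vs = 1")
    case True
    then show ?thesis
      using assms(2) ne by (simp add: is_path_def last_conv_nth hd_conv_nth)
  next
    case False
    with ne have "Suc (length vs - 2) < length vs" and "Suc (length vs - 2) = length vs - 1"
      by (cases vs; simp)+
    with assms(2) have "(vs ! (length vs - 2), last vs) \<in> E"
      by (metis is_path_def last_conv_nth ne)
    with assms(1) show ?thesis by blast
  qed
  with \<open>set vs \<subseteq> V\<close> ne show "last vs \<in> V - Inp" by auto
qed

theorem lemmaF5:
  fixes V :: "'v set" and E :: "('v \<times> 'v) set" and Inp Out :: "'v set"
  assumes "finite V"
    and "E \<subseteq> V \<times> V"
    and "acyclic E"
    and "Inp \<subseteq> V" and "Out \<subseteq> V"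
    and "\<forall>v\<in>Inp. \<forall>u. (u, v) \<notin> E"
    and "\<forall>v\<in>Out. \<forall>w. (v, w) \<notin> E"
    and "\<exists>vs. is_path V E Inp Out vs"
  shows "\<not> in_col_space (params V E Inp) (hidden V Inp Out) (incB E) (\<lambda>_. 1)"
proof -
  obtain vs where "is_path V E Inp Out vs"
    using assms(8) by blast
  with assms(6) have "last vs \<in> V - Inp" and "last vs \<in> Out"
    by (rule is_path_last_non_input)+
  then have "Bias (last vs) \<in> params V E Inp" and "last vs \<notin> hidden V Inp Out"
    by (auto simp: params_def hidden_def)
  then show ?thesis
    by (rule ones_not_in_col_space_incB)
qed

end
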